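(* Let $\mathcal D=V(\mathcal I)$ where $\mathcal I$ is a finite tuple-independent probabilistic database and $V$ is a monotone view. Then $\mathcal D\in\mathsf{sjfCQ}(\mathsf{TI}_{\mathsf{fin}})$.
   Context: Fix a countably infinite universe $U$. A database schema is a finite nonempty set of relation symbols with arities; facts are $R(u_1,\dots,u_{\mathrm{ar}(R)})$ with $u_i\in U$; an instance is a finite set of facts; $\mathrm{adom}(D)$ is the set of elements of $U$ occurring in $D$. A probabilistic database (PDB) is a discrete probability space $(\mathbb D,P)$ with $\mathbb D$ a nonempty countable set of instances; it is finite if $\mathbb D$ is finite. A PDB $\mathcal I$ is tuple-independent if for all pairwise distinct facts $f_1,\dots,f_k$, $\Pr(f_1\in I,\dots,f_k\in I)=\prod_i\Pr(f_i\in I)$; $\mathsf{TI}_{\mathsf{fin}}$ is the class of finite tuple-independent PDBs. A view is a function from instances of an input schema to instances of an output schema; it is monotone if $D\subseteq D'$ implies $V(D)\subseteq V(D')$. The image of a PDB $(\mathbb D,P)$ under $V$ is the PDB on $V(\mathbb D)$ with $P'(\{D'\})=P(\{D:V(D)=D'\})$. A self-join free conjunctive query is a first-order formula built from relational atoms $R(\bar u)$ ($\bar u$ variables or constants) and equality atoms using only $\exists$ and $\wedge$, in which each relation symbol occurs at most once; it is evaluated under active domain semantics. An sjfCQ-view consists of one such formula $\Phi_R(x_1,\dots,x_{\mathrm{ar}(R)})$ per output relation $R$, mapping $D$ to the instance of all $R(\bar a)$ with $\bar a$ over $\mathrm{adom}(D)\cup\mathrm{adom}(\Phi_R)$ and $D\models\Phi_R[\bar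 a]$. $\mathsf{sjfCQ}(\mathsf{TI}_{\mathsf{fin}})$ is the class of images of finite TI-PDBs under sjfCQ-views. *)

theory Defs
  imports "HOL-Analysis.Infinite_Sum"
begin

text \<open>A relation symbol is a pair (name, arity); its arity is the second component.\<close>
type_synonym rsym = "nat \<times> nat"

definition ar :: "rsym \<Rightarrow> nat" where "ar R = snd R"

type_synonym 'u fact = "rsym \<times> 'u list"
type_synonym 'u inst = "'u fact set"

definition is_schema :: "rsym set \<Rightarrow> bool" where
  "is_schema S \<longleftrightarrow> finite S \<and> S \<noteq> {}"

definition is_fact :: "rsym set \<Rightarrow> 'u fact \<Rightarrow> bool" where
  "is_fact S f \<longleftrightarrow> fst f \<in> S \<and> length (snd f) = ar (fst f)"

definition is_instance :: "rsym set \<Rightarrow> 'u inst \<Rightarrow> bool" where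
  "is_instance S D \<longleftrightarrow> finite D \<and> (\<forall>f\<in>D. is_fact S f)"

definition adom :: "'u inst \<Rightarrow> 'u set" where
  "adom D = (\<Union>f\<in>D. set (snd f))"

text \<open>A PDB is a pair (sample space, probability mass function); the mass function is
  normalised to be 0 outside the sample space.\<close>
type_synonym 'u pdb = "'u inst set \<times> ('u inst \<Rightarrow> real)"

definition is_pdb :: "rsym set \<Rightarrow> 'u pdb \<Rightarrow> bool" where
  "is_pdb S I \<longleftrightarrow>
     fst I \<noteq> {} \<and> countable (fst I) \<and> (\<forall>D\<in>fst I. is_instance S D) \<and>
     (\<forall>D. snd I D \<ge> 0) \<and> (\<forall>D. D \<notin> fst I \<longrightarrow> snd I D = 0) \<and>
     (snd I has_sum 1) (fst I)"

definition finite_pdb :: "'u pdb \<Rightarrow> bool" where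
  "finite_pdb I \<longleftrightarrow> finite (fst I)"

definition Pr :: "'u pdb \<Rightarrow> ('u inst \<Rightarrow> bool) \<Rightarrow> real" where
  "Pr I E = infsum (snd I) {D \<in> fst I. E D}"

text \<open>Tuple independence: for all pairwise distinct facts f_1..f_k (i.e. every finite set F of
  facts), Pr(all f_i in I) = product of Pr(f_i in I).\<close>
definition tuple_independent :: "'u pdb \<Rightarrow> bool" where
  "tuple_independent I \<longleftrightarrow>
     (\<forall>F::'u fact set. finite F \<longrightarrow>
        Pr I (\<lambda>D. F \<subseteq> D) = (\<Prod>f\<in>F. Pr I (\<lambda>D. f \<in> D)))"

definition TI_fin :: "rsym set \<Rightarrow> 'u pdb \<Rightarrow> bool" where
  "TI_fin S I \<longleftrightarrow> is_pdb S I \<and> finite_pdb I \<and> tuple_independent I"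

definition is_view :: "rsym set \<Rightarrow> rsym set \<Rightarrow> ('u inst \<Rightarrow> 'u inst) \<Rightarrow> bool" where
  "is_view Sin Sout V \<longleftrightarrow> (\<forall>D. is_instance Sin D \<longrightarrow> is_instance Sout (V D))"

definition monotone_view :: "rsym set \<Rightarrow> ('u inst \<Rightarrow> 'u inst) \<Rightarrow> bool" where
  "monotone_view Sin V \<longleftrightarrow>
     (\<forall>D D'. is_instance Sin D \<longrightarrow> is_instance Sin D' \<longrightarrow> D \<subseteq> D' \<longrightarrow> V D \<subseteq> V D')"

definition image_pdb :: "('u inst \<Rightarrow> 'u inst) \<Rightarrow> 'u pdb \<Rightarrow> 'u pdb" where
  "image_pdb V I = (V ` fst I, \<lambda>D'. infsum (snd I) {D \<in> fst I. V D = D'})"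

datatype 'u qterm = Var nat | Cst 'u

datatype 'u cq =
    Atom rsym "'u qterm list"
  | Eq "'u qterm" "'u qterm"
  | Conj "'u cq" "'u cq"
  | Ex nat "'u cq"

fun tqconsts :: "'u qterm \<Rightarrow> 'u set" where
  "tqconsts (Var _) = {}"
| "tqconsts (Cst c) = {c}"

fun tvars :: "'u qterm \<Rightarrow> nat set" where
  "tvars (Var x) = {x}"
| "tvars (Cst _) = {}"

fun qconsts :: "'u cq \<Rightarrow> 'u set" where
  "qconsts (Atom R ts) = (\<Union>t\<in>set ts. tqconsts t)"
| "qconsts (Eq s t) = tqconsts s \<union> tqconsts t"
| "qconsts (Conj p q) = qconsts p \<union> qconsts q"
| "qconsts (Ex x p) = qconsts p"

fun fvars :: "'u cq \<Rightarrow> nat set" where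
  "fvars (Atom R ts) = (\<Union>t\<in>set ts. tvars t)"
| "fvars (Eq s t) = tvars s \<union> tvars t"
| "fvars (Conj p q) = fvars p \<union> fvars q"
| "fvars (Ex x p) = fvars p - {x}"

fun rels :: "'u cq \<Rightarrow> rsym list" where
  "rels (Atom R ts) = [R]"
| "rels (Eq s t) = []"
| "rels (Conj p q) = rels p @ rels q"
| "rels (Ex x p) = rels p"

definition self_join_free :: "'u cq \<Rightarrow> bool" where
  "self_join_free \<phi> \<longleftrightarrow> distinct (rels \<phi>)"

fun wf_cq :: "rsym set \<Rightarrow> 'u cq \<Rightarrow> bool" where
  "wf_cq S (Atom R ts) \<longleftrightarrow> R \<in> S \<and> length ts = ar R"
| "wf_cq S (Eq s t) \<longleftrightarrow> True"
| "wf_cq S (Conj p q) \<longleftrightarrow> wf_cq S p \<and> wf_cq S q"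
| "wf_cq S (Ex x p) \<longleftrightarrow> wf_cq S p"

fun teval :: "(nat \<Rightarrow> 'u) \<Rightarrow> 'u qterm \<Rightarrow> 'u" where
  "teval \<sigma> (Var x) = \<sigma> x"
| "teval \<sigma> (Cst c) = c"

fun sat :: "'u inst \<Rightarrow> 'u set \<Rightarrow> (nat \<Rightarrow> 'u) \<Rightarrow> 'u cq \<Rightarrow> bool" where
  "sat D A \<sigma> (Atom R ts) \<longleftrightarrow> (R, map (teval \<sigma>) ts) \<in> D"
| "sat D A \<sigma> (Eq s t) \<longleftrightarrow> teval \<sigma> s = teval \<sigma> t"
| "sat D A \<sigma> (Conj p q) \<longleftrightarrow> sat D A \<sigma> p \<and> sat D A \<sigma> q"
| "sat D A \<sigma> (Ex x p) \<longleftrightarrow> (\<exists>a\<in>A. sat D A (\<sigma>(x := a)) p)"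

text \<open>An sjfCQ-view from Sin to Sout: one sjf CQ Phi R (x_1,...,x_ar(R)) per output relation R;
  the free variables x_1..x_k are represented by the variable indices 0..k-1.\<close>
definition is_sjf_view :: "rsym set \<Rightarrow> rsym set \<Rightarrow> (rsym \<Rightarrow> 'u cq) \<Rightarrow> bool" where
  "is_sjf_view Sin Sout \<Phi> \<longleftrightarrow>
     (\<forall>R\<in>Sout. wf_cq Sin (\<Phi> R) \<and> self_join_free (\<Phi> R) \<and> fvars (\<Phi> R) \<subseteq> {..<ar R})"

text \<open>Active domain semantics: tuples and quantifiers range over adom(D) \<union> adom(Phi_R).\<close>
definition sjf_view_apply :: "rsym set \<Rightarrow> (rsym \<Rightarrow> 'u cq) \<Rightarrow> 'u inst \<Rightarrow> 'u inst" where
  "sjf_view_apply Sout \<Phi> D =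
     {(R, as) | R as. R \<in> Sout \<and> length as = ar R \<and>
        set as \<subseteq> adom D \<union> qconsts (\<Phi> R) \<and>
        sat D (adom D \<union> qconsts (\<Phi> R)) (\<lambda>i. as ! i) (\<Phi> R)}"

definition in_sjfCQ_TI_fin :: "rsym set \<Rightarrow> 'u pdb \<Rightarrow> bool" where
  "in_sjfCQ_TI_fin Sout \<D> \<longleftrightarrow>
     (\<exists>Sin (I :: 'u pdb) (\<Phi> :: rsym \<Rightarrow> 'u cq).
        is_schema Sin \<and> TI_fin Sin I \<and> is_sjf_view Sin Sout \<Phi> \<and>
        \<D> = image_pdb (sjf_view_apply Sout \<Phi>) I)"

end

theory Submission
  imports Defs
begin

(* Re-encode the finite TI-PDB over a new schema. Each fact f occurring in I becomes a unary
   fact X_f(one), present exactly when f is, next to the certain fact X_f(star); all other new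
   facts are certain too, so tuple independence survives. The certain table T_R holds (a, b_M)
   for every set M of facts of I and every R(a) in V(M), where b_M is the one/star indicator
   tuple of M. On the encoding of D the self-join free query
     Phi_R(x) = EX y. X_f1(y_1) & ... & X_fn(y_n) & T_R(x, y)
   can only pick indicator tuples of sets M contained in D, so it returns the union of the V(M)
   with M contained in D, which is V(D) by monotonicity. The infinite universe supplies the two
   distinct constants one and star. *)

lemma Pr_cong: "(\<And>D. D \<in> fst I \<Longrightarrow> E D = E' D) \<Longrightarrow> Pr I E = Pr I E'"
  unfolding Pr_def by (metis (mono_tags, lifting) Collect_cong)

lemma Pr_eq_0: "(\<And>D. D \<in> fst I \<Longrightarrow> \<not> E D) \<Longrightarrow> Pr I E = 0"
  unfolding Pr_def by (metis (mono_tags, lifting) empty_Collect_eq infsum_empty)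

lemma Pr_eq_1: "is_pdb S I \<Longrightarrow> (\<And>D. D \<in> fst I \<Longrightarrow> E D) \<Longrightarrow> Pr I E = 1"
  unfolding Pr_def is_pdb_def by (metis (mono_tags, lifting) Collect_mem_eq Collect_cong infsumI)

lemma Pr_image_pdb:
  assumes "finite (fst I)"
  shows "Pr (image_pdb W I) E = Pr I (\<lambda>D. E (W D))"
proof -
  have "Pr (image_pdb W I) E = (\<Sum>D'\<in>{D' \<in> W ` fst I. E D'}. \<Sum>D\<in>{D \<in> fst I. W D = D'}. snd I D)"
    unfolding Pr_def image_pdb_def using assms by (simp add: infsum_finite)
  also have "\<dots> = (\<Sum>D'\<in>{D' \<in> W ` fst I. E D'}. \<Sum>D\<in>{D \<in> {D \<in> fst I. E (W D)}. W D = D'}. snd I D)"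
    by (auto intro!: sum.cong)
  also have "\<dots> = (\<Sum>D\<in>{D \<in> fst I. E (W D)}. snd I D)"
    by (rule sum.group) (use assms in auto)
  also have "\<dots> = Pr I (\<lambda>D. E (W D))"
    unfolding Pr_def using assms by (simp add: infsum_finite)
  finally show ?thesis .
qed

lemma image_pdb_image_pdb:
  assumes "finite (fst I)"
  shows "image_pdb W (image_pdb E I) = image_pdb (W \<circ> E) I"
proof -
  have "snd (image_pdb W (image_pdb E I)) D' = Pr (image_pdb E I) (\<lambda>D. W D = D')" for D'
    unfolding Pr_def image_pdb_def by simp
  also have "Pr (image_pdb E I) (\<lambda>D. W D = D') = snd (image_pdb (W \<circ> E) I) D'" for D'
    unfolding Pr_image_pdb[OF assms] unfolding Pr_def image_pdb_def by simp
  finally show ?thesis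
    by (simp add: prod_eq_iff image_pdb_def image_image)
qed

lemma image_pdb_cong:
  assumes "\<And>D. D \<in> fst I \<Longrightarrow> W D = W' D"
  shows "image_pdb W I = image_pdb W' I"
proof -
  have "W ` fst I = W' ` fst I" and "\<And>D'. {D \<in> fst I. W D = D'} = {D \<in> fst I. W' D = D'}"
    using assms by auto
  then show ?thesis unfolding image_pdb_def by simp
qed

lemma is_pdb_image_pdb:
  assumes pdb: "is_pdb S I" and fin: "finite (fst I)"
    and inst: "\<And>D. D \<in> fst I \<Longrightarrow> is_instance S' (W D)"
  shows "is_pdb S' (image_pdb W I)"
proof -
  have "infsum (snd (image_pdb W I)) (W ` fst I) = 1"
    using Pr_image_pdb[OF fin, of W "\<lambda>_. True"] Pr_eq_1[OF pdb, of "\<lambda>_. True"]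
    unfolding Pr_def image_pdb_def by simp
  then have "(snd (image_pdb W I) has_sum 1) (W ` fst I)"
    using fin by (metis finite_imageI has_sum_infsum summable_on_finite)
  moreover have "snd (image_pdb W I) D' \<ge> 0" for D'
    using pdb fin unfolding is_pdb_def image_pdb_def by (auto simp: infsum_finite intro!: sum_nonneg)
  moreover have "snd (image_pdb W I) D' = 0" if "D' \<notin> W ` fst I" for D'
  proof -
    have no_preimage: "{D \<in> fst I. W D = D'} = {}" using that by auto
    show ?thesis unfolding image_pdb_def snd_conv no_preimage by simp
  qed
  ultimately show ?thesis
    using pdb fin inst unfolding is_pdb_def by (auto simp: countable_finite image_pdb_def)
qed

lemma subset_image_union_iff:
  assumes "inj_on \<rho> U" and "\<rho> ` U \<inter> C = {}" and "D \<subseteq> U" and "G \<subseteq> \<rho> ` U \<union> C"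
  shows "G \<subseteq> \<rho> ` D \<union> C \<longleftrightarrow> \<rho> -` G \<inter> U \<subseteq> D"
  using assms by (blast dest: inj_onD)

lemma tuple_independent_image_pdb_rename_union:
  fixes \<rho> :: "'u fact \<Rightarrow> 'u fact"
  assumes pdb: "is_pdb S I" and fin: "finite (fst I)" and TI: "tuple_independent I"
    and inj: "inj_on \<rho> (\<Union>(fst I))" and disj: "\<rho> ` \<Union>(fst I) \<inter> C = {}"
  shows "tuple_independent (image_pdb (\<lambda>D. \<rho> ` D \<union> C) I)"
  unfolding tuple_independent_def Pr_image_pdb[OF fin]
proof (intro allI impI)
  fix G :: "'u fact set" assume finG: "finite G"
  let ?U = "\<Union>(fst I)"
  show "Pr I (\<lambda>D. G \<subseteq> \<rho> ` D \<union> C) = (\<Prod>g\<in>G. Pr I (\<lambda>D. g \<in> \<rho> ` D \<union> C))"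
  proof (cases "G \<subseteq> \<rho> ` ?U \<union> C")
    case True
    define H where "H = \<rho> -` G \<inter> ?U"
    have finH: "finite H"
      unfolding H_def using finG inj by (rule finite_vimage_IntI)
    have renamed: "Pr I (\<lambda>D. \<rho> f \<in> \<rho> ` D \<union> C) = Pr I (\<lambda>D. f \<in> D)" if "f \<in> ?U" for f
      by (rule Pr_cong) (use inj disj that in \<open>auto dest: inj_onD\<close>)
    have in_C: "Pr I (\<lambda>D. g \<in> \<rho> ` D \<union> C) = 1" if "g \<in> C" for g
      by (rule Pr_eq_1[OF pdb]) (use that in blast)
    have "Pr I (\<lambda>D. G \<subseteq> \<rho> ` D \<union> C) = Pr I (\<lambda>D. H \<subseteq> D)"
      unfolding H_def using subset_image_union_iff[OF inj disj _ True] by (intro Pr_cong) blast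
    also have "\<dots> = (\<Prod>f\<in>H. Pr I (\<lambda>D. f \<in> D))"
      using TI finH unfolding tuple_independent_def by blast
    also have "\<dots> = (\<Prod>g\<in>\<rho> ` H. Pr I (\<lambda>D. g \<in> \<rho> ` D \<union> C))"
      by (intro prod.reindex_cong[symmetric, OF inj_on_subset[OF inj]] refl renamed)
        (auto simp: H_def)
    also have "\<dots> = (\<Prod>g\<in>G. Pr I (\<lambda>D. g \<in> \<rho> ` D \<union> C))"
    proof (rule prod.mono_neutral_left[OF finG])
      show "\<rho> ` H \<subseteq> G" unfolding H_def by blast
      show "\<forall>g\<in>G - \<rho> ` H. Pr I (\<lambda>D. g \<in> \<rho> ` D \<union> C) = 1"
        using True in_C unfolding H_def by blast
    qed
    finally show ?thesis .
  next
    case False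
    then obtain g where "g \<in> G" and g: "g \<notin> \<rho> ` ?U \<union> C" by blast
    have zero_g: "Pr I (\<lambda>D. g \<in> \<rho> ` D \<union> C) = 0"
      by (rule Pr_eq_0) (use g in blast)
    have zero_G: "Pr I (\<lambda>D. G \<subseteq> \<rho> ` D \<union> C) = 0"
      by (rule Pr_eq_0) (use g \<open>g \<in> G\<close> in blast)
    show ?thesis
      unfolding zero_G by (rule sym, rule prod_zero[OF finG]) (use \<open>g \<in> G\<close> zero_g in blast)
  qed
qed

lemma sat_foldr_Ex:
  "sat D A \<sigma> (foldr Ex xs \<phi>) \<longleftrightarrow>
   (\<exists>\<tau>. (\<forall>j. j \<notin> set xs \<longrightarrow> \<tau> j = \<sigma> j) \<and> (\<forall>j\<in>set xs. \<tau> j \<in> A) \<and> sat D A \<tau> \<phi>)"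
proof (induction xs arbitrary: \<sigma>)
  case Nil
  have "(\<forall>j. \<tau> j = \<sigma> j) \<longleftrightarrow> \<tau> = \<sigma>" for \<tau> :: "nat \<Rightarrow> 'a" by auto
  then show ?case by simp
next
  case (Cons x xs)
  show ?case
  proof
    assume "sat D A \<sigma> (foldr Ex (x # xs) \<phi>)"
    then obtain a where a: "a \<in> A" "sat D A (\<sigma>(x := a)) (foldr Ex xs \<phi>)" by auto
    then obtain \<tau> where "\<forall>j. j \<notin> set xs \<longrightarrow> \<tau> j = (\<sigma>(x := a)) j" "\<forall>j\<in>set xs. \<tau> j \<in> A" "sat D A \<tau> \<phi>"
      using Cons.IH by blast
    with a show "\<exists>\<tau>. (\<forall>j. j \<notin> set (x # xs) \<longrightarrow> \<tau> j = \<sigma> j) \<and> (\<forall>j\<in>set (x # xs). \<tau> j \<in> A) \<and> sat D A \<tau> \<phi>"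
      by (intro exI[of _ \<tau>]) (cases "x \<in> set xs"; auto)
  next
    assume "\<exists>\<tau>. (\<forall>j. j \<notin> set (x # xs) \<longrightarrow> \<tau> j = \<sigma> j) \<and> (\<forall>j\<in>set (x # xs). \<tau> j \<in> A) \<and> sat D A \<tau> \<phi>"
    then obtain \<tau> where \<tau>: "\<forall>j. j \<notin> set (x # xs) \<longrightarrow> \<tau> j = \<sigma> j" "\<forall>j\<in>set (x # xs). \<tau> j \<in> A" "sat D A \<tau> \<phi>"
      by blast
    then have "sat D A (\<sigma>(x := \<tau> x)) (foldr Ex xs \<phi>)"
      unfolding Cons.IH by (intro exI[of _ \<tau>]) auto
    with \<tau>(2) show "sat D A \<sigma> (foldr Ex (x # xs) \<phi>)" by auto
  qed
qed

lemma fvars_foldr_Ex: "fvars (foldr Ex xs \<phi>) = fvars \<phi> - set xs"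
  by (induction xs) auto

lemma qconsts_foldr_Ex: "qconsts (foldr Ex xs \<phi>) = qconsts \<phi>"
  by (induction xs) auto

lemma rels_foldr_Ex: "rels (foldr Ex xs \<phi>) = rels \<phi>"
  by (induction xs) auto

lemma wf_cq_foldr_Ex: "wf_cq S (foldr Ex xs \<phi>) \<longleftrightarrow> wf_cq S \<phi>"
  by (induction xs) auto

lemma sat_foldr_Conj: "sat D A \<sigma> (foldr Conj ps \<psi>) \<longleftrightarrow> (\<forall>p\<in>set ps. sat D A \<sigma> p) \<and> sat D A \<sigma> \<psi>"
  by (induction ps) auto

lemma fvars_foldr_Conj: "fvars (foldr Conj ps \<psi>) = (\<Union>p\<in>set ps. fvars p) \<union> fvars \<psi>"
  by (induction ps) auto

lemma qconsts_foldr_Conj: "qconsts (foldr Conj ps \<psi>) = (\<Union>p\<in>set ps. qconsts p) \<union> qconsts \<psi>"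
  by (induction ps) auto

lemma rels_foldr_Conj: "rels (foldr Conj ps \<psi>) = concat (map rels ps) @ rels \<psi>"
  by (induction ps) auto

lemma wf_cq_foldr_Conj: "wf_cq S (foldr Conj ps \<psi>) \<longleftrightarrow> (\<forall>p\<in>set ps. wf_cq S p) \<and> wf_cq S \<psi>"
  by (induction ps) auto

lemma mem_adom: "(R, us) \<in> D \<Longrightarrow> u \<in> set us \<Longrightarrow> u \<in> adom D"
  unfolding adom_def by force

locale monotone_view_encoding =
  fixes Sin Sout :: "rsym set" and I :: "('u::countable) pdb" and V :: "'u inst \<Rightarrow> 'u inst"
    and fs :: "'u fact list" and one star :: 'u
  assumes TI_fin: "TI_fin Sin I"
    and view: "is_view Sin Sout V" and mono: "monotone_view Sin V" and Sout: "is_schema Sout"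
    and set_fs: "set fs = \<Union>(fst I)" and distinct_fs: "distinct fs"
    and one_neq_star: "one \<noteq> star"
begin

abbreviation "n \<equiv> length fs"

definition fact_rel :: "'u fact \<Rightarrow> rsym" where
  "fact_rel f = (2 * to_nat f, 1)"

definition view_rel :: "rsym \<Rightarrow> rsym" where
  "view_rel R = (2 * fst R + 1, ar R + n)"

definition indicator_tuple :: "'u inst \<Rightarrow> 'u list" where
  "indicator_tuple M = map (\<lambda>f. if f \<in> M then one else star) fs"

definition view_table :: "'u inst" where
  "view_table = {(view_rel R, a @ indicator_tuple M) | R M a. R \<in> Sout \<and> M \<subseteq> set fs \<and> (R, a) \<in> V M}"

definition encode :: "'u inst \<Rightarrow> 'u inst" where
  "encode D = (\<lambda>f. (fact_rel f, [one])) ` D \<union> ((\<lambda>f. (fact_rel f, [star])) ` set fs \<union> view_table)"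

definition enc_schema :: "rsym set" where
  "enc_schema = fact_rel ` set fs \<union> view_rel ` Sout"

definition decode_query :: "rsym \<Rightarrow> 'u cq" where
  "decode_query R = foldr Ex [ar R..<ar R + n]
     (foldr Conj (map (\<lambda>i. Atom (fact_rel (fs ! i)) [Var (ar R + i)]) [0..<n])
        (Atom (view_rel R) (map Var [0..<ar R + n])))"

lemma fact_rel_eq_iff [simp]: "fact_rel f = fact_rel g \<longleftrightarrow> f = g"
  by (simp add: fact_rel_def)

lemma view_rel_eq_iff [simp]: "view_rel R = view_rel R' \<longleftrightarrow> R = R'"
  by (auto simp: view_rel_def ar_def prod_eq_iff)

lemma fact_rel_neq_view_rel [simp]: "fact_rel f \<noteq> view_rel R" "view_rel R \<noteq> fact_rel f"
  by (auto simp: fact_rel_def view_rel_def) presburger+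

lemma ar_fact_rel [simp]: "ar (fact_rel f) = 1"
  by (simp add: ar_def fact_rel_def)

lemma ar_view_rel [simp]: "ar (view_rel R) = ar R + n"
  by (simp add: ar_def view_rel_def)

lemma length_indicator_tuple [simp]: "length (indicator_tuple M) = n"
  by (simp add: indicator_tuple_def)

lemma is_pdb_I: "is_pdb Sin I" and finite_I: "finite (fst I)"
  using TI_fin unfolding TI_fin_def finite_pdb_def by auto

lemma is_instance_subset_facts:
  assumes "M \<subseteq> set fs"
  shows "is_instance Sin M"
  unfolding is_instance_def
proof
  show "finite M" using assms finite_subset by blast
  show "\<forall>f\<in>M. is_fact Sin f"
  proof
    fix f assume "f \<in> M"
    then obtain D where "D \<in> fst I" "f \<in> D" using assms set_fs by auto
    then show "is_fact Sin f" using is_pdb_I unfolding is_pdb_def is_instance_def by blast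
  qed
qed

lemma is_instance_V: "M \<subseteq> set fs \<Longrightarrow> is_instance Sout (V M)"
  using view is_instance_subset_facts unfolding is_view_def by blast

lemma length_V:
  assumes "M \<subseteq> set fs" and "(R, a) \<in> V M"
  shows "length a = ar R"
proof -
  have "is_fact Sout (R, a)"
    using is_instance_V[OF assms(1)] assms(2) unfolding is_instance_def by blast
  then show ?thesis unfolding is_fact_def by simp
qed

lemma finite_view_table: "finite view_table"
proof -
  let ?g = "\<lambda>(M, R, a). (view_rel R, a @ indicator_tuple M)"
  have "finite (SIGMA M:Pow (set fs). V M)"
  proof (rule finite_SigmaI)
    show "finite (V M)" if "M \<in> Pow (set fs)" for M
      using is_instance_V that unfolding is_instance_def by blast
  qed simp
  moreover have "view_table \<subseteq> ?g ` (SIGMA M:Pow (set fs). V M)"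
  proof
    fix x assume "x \<in> view_table"
    then obtain R M a where "x = ?g (M, R, a)" "M \<subseteq> set fs" "(R, a) \<in> V M"
      unfolding view_table_def by auto
    then show "x \<in> ?g ` (SIGMA M:Pow (set fs). V M)" by blast
  qed
  ultimately show ?thesis by (rule finite_surj)
qed

lemma is_instance_encode:
  assumes "D \<subseteq> set fs"
  shows "is_instance enc_schema (encode D)"
  unfolding is_instance_def
proof
  have "finite D" using assms finite_subset by blast
  then show "finite (encode D)" by (simp add: encode_def finite_view_table)
  show "\<forall>g\<in>encode D. is_fact enc_schema g"
  proof
    fix g assume "g \<in> encode D"
    then consider f u where "g = (fact_rel f, [u])" "f \<in> set fs"
      | R M a where "g = (view_rel R, a @ indicator_tuple M)" "R \<in> Sout" "M \<subseteq> set fs" "(R, a) \<in> V M"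
      using assms unfolding encode_def view_table_def by blast
    then show "is_fact enc_schema g"
    proof cases
      case 1
      then show ?thesis by (simp add: is_fact_def enc_schema_def)
    next
      case 2
      then show ?thesis using length_V[OF 2(3,4)] by (simp add: is_fact_def enc_schema_def)
    qed
  qed
qed

lemma fact_rel_notin_view_table: "(fact_rel f, us) \<notin> view_table"
  unfolding view_table_def by simp

lemma mem_encode_fact_rel:
  "(fact_rel f, [u]) \<in> encode D \<longleftrightarrow> f \<in> set fs \<and> (u = one \<and> f \<in> D \<or> u = star)"
  if "D \<subseteq> set fs"
proof -
  have mem_image: "(fact_rel f, [u]) \<in> (\<lambda>g. (fact_rel g, [v])) ` X \<longleftrightarrow> f \<in> X \<and> u = v" for v X
    by force
  show ?thesis
    using fact_rel_notin_view_table that unfolding encode_def Un_iff mem_image by blast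
qed

lemma mem_encode_view_rel:
  "(view_rel R, bs) \<in> encode D \<longleftrightarrow>
   (\<exists>M a. R \<in> Sout \<and> M \<subseteq> set fs \<and> (R, a) \<in> V M \<and> bs = a @ indicator_tuple M)"
proof -
  have "(view_rel R, bs) \<notin> (\<lambda>f. (fact_rel f, [u])) ` X" for u X by auto
  then have "(view_rel R, bs) \<in> encode D \<longleftrightarrow> (view_rel R, bs) \<in> view_table"
    unfolding encode_def by blast
  also have "\<dots> \<longleftrightarrow> (\<exists>M a. R \<in> Sout \<and> M \<subseteq> set fs \<and> (R, a) \<in> V M \<and> bs = a @ indicator_tuple M)"
    unfolding view_table_def by (simp only: mem_Collect_eq prod.inject view_rel_eq_iff) blast
  finally show ?thesis .
qed

lemma qconsts_decode_query [simp]: "qconsts (decode_query R) = {}"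
  unfolding decode_query_def qconsts_foldr_Ex qconsts_foldr_Conj by auto

lemma sat_decode_query:
  assumes "length as = ar R"
  shows "sat D A (\<lambda>i. as ! i) (decode_query R) \<longleftrightarrow>
    (\<exists>ys. length ys = n \<and> set ys \<subseteq> A \<and> (\<forall>i<n. (fact_rel (fs ! i), [ys ! i]) \<in> D) \<and>
         (view_rel R, as @ ys) \<in> D)"
    (is "_ \<longleftrightarrow> (\<exists>ys. ?P ys)")
proof -
  let ?m = "ar R"
  have "sat D A (\<lambda>i. as ! i) (decode_query R) \<longleftrightarrow>
    (\<exists>\<tau>. (\<forall>j. j \<notin> {?m..<?m + n} \<longrightarrow> \<tau> j = as ! j) \<and> (\<forall>j\<in>{?m..<?m + n}. \<tau> j \<in> A) \<and>
         (\<forall>i<n. (fact_rel (fs ! i), [\<tau> (?m + i)]) \<in> D) \<and> (view_rel R, map \<tau> [0..<?m + n]) \<in> D)"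
    (is "_ \<longleftrightarrow> (\<exists>\<tau>. ?Q \<tau>)")
    unfolding decode_query_def sat_foldr_Ex sat_foldr_Conj by (auto simp: comp_def)
  also have "\<dots> \<longleftrightarrow> (\<exists>ys. ?P ys)"
  proof
    assume "\<exists>\<tau>. ?Q \<tau>"
    then obtain \<tau> where outside: "\<forall>j. j \<notin> {?m..<?m + n} \<longrightarrow> \<tau> j = as ! j"
      and inside: "\<forall>j\<in>{?m..<?m + n}. \<tau> j \<in> A"
      and facts: "\<forall>i<n. (fact_rel (fs ! i), [\<tau> (?m + i)]) \<in> D"
      and table: "(view_rel R, map \<tau> [0..<?m + n]) \<in> D"
      by blast
    have "map \<tau> [0..<?m + n] = as @ map (\<lambda>i. \<tau> (?m + i)) [0..<n]"
      using outside assms by (intro nth_equalityI) (auto simp: nth_append)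
    with inside facts table show "\<exists>ys. ?P ys"
      by (intro exI[of _ "map (\<lambda>i. \<tau> (?m + i)) [0..<n]"]) auto
  next
    assume "\<exists>ys. ?P ys"
    then obtain ys where "?P ys" by blast
    moreover define \<tau> where "\<tau> j = (if ?m \<le> j \<and> j < ?m + n then ys ! (j - ?m) else as ! j)" for j
    moreover have "map \<tau> [0..<?m + n] = as @ ys"
      using assms \<open>?P ys\<close> by (intro nth_equalityI) (auto simp: \<tau>_def nth_append)
    ultimately show "\<exists>\<tau>. ?Q \<tau>"
      by (intro exI[of _ \<tau>]) (auto simp: \<tau>_def subset_iff)
  qed
  finally show ?thesis .
qed

lemma decode_encode_subset_V:
  assumes D: "D \<subseteq> set fs" and R: "(R, as) \<in> sjf_view_apply Sout decode_query (encode D)"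
  shows "(R, as) \<in> V D"
proof -
  from R have las: "length as = ar R"
    and "sat (encode D) (adom (encode D)) (\<lambda>i. as ! i) (decode_query R)"
    unfolding sjf_view_apply_def by auto
  then obtain ys where ys: "\<forall>i<n. (fact_rel (fs ! i), [ys ! i]) \<in> encode D"
    and table: "(view_rel R, as @ ys) \<in> encode D"
    unfolding sat_decode_query[OF las] by blast
  from table obtain M a where M: "M \<subseteq> set fs" "(R, a) \<in> V M" and eq: "as @ ys = a @ indicator_tuple M"
    unfolding mem_encode_view_rel by blast
  have "a = as" and ys_M: "ys = indicator_tuple M"
    using eq length_V[OF M] las by (simp_all add: append_eq_append_conv)
  have "M \<subseteq> D"
  proof
    fix f assume "f \<in> M"
    then obtain i where i: "i < n" "fs ! i = f" using M(1) by (metis in_set_conv_nth subsetD)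
    then have "ys ! i = one" using \<open>f \<in> M\<close> ys_M by (simp add: indicator_tuple_def)
    with ys i show "f \<in> D" using mem_encode_fact_rel[OF D] one_neq_star by metis
  qed
  then have "V M \<subseteq> V D"
    using mono is_instance_subset_facts M(1) D unfolding monotone_view_def by blast
  then show ?thesis using M(2) \<open>a = as\<close> by blast
qed

lemma V_subset_decode_encode:
  assumes D: "D \<subseteq> set fs" and RV: "(R, as) \<in> V D"
  shows "(R, as) \<in> sjf_view_apply Sout decode_query (encode D)"
proof -
  have "is_fact Sout (R, as)"
    using is_instance_V[OF D] RV unfolding is_instance_def by blast
  then have R: "R \<in> Sout" and las: "length as = ar R"
    unfolding is_fact_def by simp_all
  let ?ys = "indicator_tuple D"
  have table: "(view_rel R, as @ ?ys) \<in> encode D"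
    unfolding mem_encode_view_rel using R D RV by blast
  have facts: "\<forall>i<n. (fact_rel (fs ! i), [?ys ! i]) \<in> encode D"
    by (simp add: mem_encode_fact_rel[OF D] indicator_tuple_def)
  have adom_as: "set as \<subseteq> adom (encode D)" and adom_ys: "set ?ys \<subseteq> adom (encode D)"
    using mem_adom[OF table] by auto
  have "sat (encode D) (adom (encode D)) (\<lambda>i. as ! i) (decode_query R)"
    unfolding sat_decode_query[OF las]
    by (intro exI[of _ ?ys] conjI length_indicator_tuple adom_ys facts table)
  then show ?thesis
    unfolding sjf_view_apply_def qconsts_decode_query Un_empty_right using R las adom_as by blast
qed

lemma sjf_view_apply_decode_encode:
  "D \<subseteq> set fs \<Longrightarrow> sjf_view_apply Sout decode_query (encode D) = V D"
  using decode_encode_subset_V V_subset_decode_encode by (intro set_eqI) (metis surj_pair)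

lemma tuple_independent_encode: "tuple_independent (image_pdb encode I)"
  unfolding encode_def[abs_def]
proof (rule tuple_independent_image_pdb_rename_union[OF is_pdb_I finite_I])
  show "tuple_independent I" using TI_fin unfolding TI_fin_def by blast
  show "inj_on (\<lambda>f. (fact_rel f, [one])) (\<Union>(fst I))" by (simp add: inj_on_def)
  show "(\<lambda>f. (fact_rel f, [one])) ` \<Union>(fst I) \<inter> ((\<lambda>f. (fact_rel f, [star])) ` set fs \<union> view_table) = {}"
    using one_neq_star fact_rel_notin_view_table by auto
qed

lemma is_sjf_view_decode_query: "is_sjf_view enc_schema Sout decode_query"
  unfolding is_sjf_view_def
proof (intro ballI conjI)
  fix R assume R: "R \<in> Sout"
  show "wf_cq enc_schema (decode_query R)"
    unfolding decode_query_def wf_cq_foldr_Ex wf_cq_foldr_Conj using R by (auto simp: enc_schema_def)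
  have "rels (decode_query R) = map fact_rel fs @ [view_rel R]"
    unfolding decode_query_def rels_foldr_Ex rels_foldr_Conj
    by (simp add: map_nth[of fs, symmetric, THEN arg_cong[where f = "map fact_rel"]] comp_def)
  then show "self_join_free (decode_query R)"
    unfolding self_join_free_def using distinct_fs by (auto simp: distinct_map inj_on_def)
  show "fvars (decode_query R) \<subseteq> {..<ar R}"
    unfolding decode_query_def fvars_foldr_Ex fvars_foldr_Conj by auto
qed

lemma is_schema_enc_schema: "is_schema enc_schema"
  using Sout unfolding is_schema_def enc_schema_def by simp

lemma TI_fin_encode: "TI_fin enc_schema (image_pdb encode I)"
proof -
  have "is_instance enc_schema (encode D)" if "D \<in> fst I" for D
    using that set_fs by (intro is_instance_encode) auto
  then have "is_pdb enc_schema (image_pdb encode I)"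
    by (rule is_pdb_image_pdb[OF is_pdb_I finite_I])
  then show ?thesis
    unfolding TI_fin_def finite_pdb_def using tuple_independent_encode finite_I
    by (simp add: image_pdb_def)
qed

lemma image_pdb_V_decode_encode:
  "image_pdb V I = image_pdb (sjf_view_apply Sout decode_query) (image_pdb encode I)"
proof -
  have "image_pdb (sjf_view_apply Sout decode_query) (image_pdb encode I) =
        image_pdb (sjf_view_apply Sout decode_query \<circ> encode) I"
    by (rule image_pdb_image_pdb[OF finite_I])
  also have "\<dots> = image_pdb V I"
    by (rule image_pdb_cong) (use set_fs sjf_view_apply_decode_encode in auto)
  finally show ?thesis ..
qed

lemma in_sjfCQ_TI_fin_image_pdb_V: "in_sjfCQ_TI_fin Sout (image_pdb V I)"
  unfolding in_sjfCQ_TI_fin_def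
  using is_schema_enc_schema TI_fin_encode is_sjf_view_decode_query image_pdb_V_decode_encode
  by blast

end

theorem proposition7p3:
  fixes Sin Sout :: "rsym set"
    and I :: "('u::countable) pdb"
    and V :: "'u inst \<Rightarrow> 'u inst"
  assumes "infinite (UNIV :: 'u set)"
    and "is_schema Sin" and "is_schema Sout"
    and "TI_fin Sin I"
    and "is_view Sin Sout V"
    and "monotone_view Sin V"
  shows "in_sjfCQ_TI_fin Sout (image_pdb V I)"
proof -
  obtain one star :: 'u where "one \<noteq> star"
    using ex_new_if_finite[OF assms(1), of "{undefined}"] by blast
  have "finite (fst I)" and "\<forall>D\<in>fst I. finite D"
    using assms(4) unfolding TI_fin_def finite_pdb_def is_pdb_def is_instance_def by auto
  then obtain fs where "set fs = \<Union>(fst I)" and "distinct fs"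
    using finite_distinct_list[OF finite_Union] by metis
  interpret monotone_view_encoding Sin Sout I V fs one star
    by unfold_locales (use assms \<open>one \<noteq> star\<close> \<open>set fs = \<Union>(fst I)\<close> \<open>distinct fs\<close> in auto)
  show ?thesis by (rule in_sjfCQ_TI_fin_image_pdb_V)
qed

end
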